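(* Let $I_{H,\Delta,d}$ be a reducible hidden variable ideal, i.e. $\Delta$ is reducible with components $\Delta_1,\Delta_2$ and separator $S$, and $H\cap S=\emptyset$. Let $H_l=H\cap|\Delta_l|$ and let $d^l$ be the restriction of $d$ to $|\Delta_l|$. In each of the rings $\mathbb{K}[q]$, $\mathbb{K}[q]_1$, $\mathbb{K}[q]_2$ grade the variables by $\deg q_{\mathbf{i}}=e_{\mathbf{i}_S}\in\mathbb{Z}^{D_S}$, and let $\mathcal{A}=\{e_\sigma:\sigma\in D_S\}$. Then $\mathcal{A}$ is linearly independent and $$I_{H,\Delta,d}=I_{H_1,\Delta_1,d^1}\times_{\mathcal{A}}I_{H_2,\Delta_2,d^2},$$ where the toric fiber product variable corresponding to $q_{\mathbf{i}}$ is the product of the variables of $\mathbb{K}[q]_1$ and $\mathbb{K}[q]_2$ obtained by restricting $\mathbf{i}$ to $|\Delta_1|$ and $|\Delta_2|$.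
   Context: $\mathbb{K}$ is a field. $\Delta$ is a simplicial complex on $[n]$ with $|\Delta|:=\bigcup_{F\in\Delta}F=[n]$, $d=(d_1,\dots,d_n)$ with $d_i\ge2$; $D_F=\prod_{k\in F}[d_k]$ and $\mathbf{i}_F$ denotes restriction of an index vector to $F$. $\mathbb{K}[p]=\mathbb{K}[p_{\mathbf{i}}:\mathbf{i}\in D_{[n]}]$, $\mathbb{K}[a]=\mathbb{K}[a^F_{\mathbf{j}_F}:F\in\mathrm{facet}(\Delta),\mathbf{j}_F\in D_F]$, $\phi_{\Delta,d}:p_{\mathbf{i}}\mapsto\prod_{F\in\mathrm{facet}(\Delta)}a^F_{\mathbf{i}_F}$. $H\subseteq[n]$ is the set of hidden nodes, $O=[n]\setminus H$. $\mathbb{K}[q]=\mathbb{K}[q_{\mathbf{i}}]$ with $\mathbf{i}$ having entries $\mathbf{i}_O\in D_O$ and $i_l=\bullet$ for $l\in H$. $\psi_H:\mathbb{K}[q]\to\mathbb{K}[p]$, $q_{\mathbf{i}}\mapsto\sum_{\mathbf{j}_H\in D_H}p_{\mathbf{i}_O\mathbf{j}_H}$, where $p_{\mathbf{i}_O\mathbf{j}_H}$ is the variable with index $\mathbf{i}_O$ on $O$ and $\mathbf{j}_H$ on $H$. The hidden variable ideal is $I_{H,\Delta,d}=\ker(\phi_{\Delta,d}\circ\psi_H)$. $\Delta$ is reducible if there are subcomplexes $\Delta_1,\Delta_2$ with $\Delta_1\cup\Delta_2=\Delta$ and $\Delta_1\cap\Delta_2=2^S$ for some $S\subseteq[n]$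 (the separator); $I_{H,\Delta,d}$ is called reducible if moreover $H\cap S=\emptyset$. $\mathbb{K}[q]_l$ and $I_{H_l,\Delta_l,d^l}$ are defined in the same way for $\Delta_l$ on the vertex set $|\Delta_l|$ with hidden set $H_l$. $e_\sigma$ is the standard unit vector of $\mathbb{Z}^{D_S}$ at $\sigma$. Toric fiber product: for polynomial rings $\mathbb{K}[x^i_j]$, $\mathbb{K}[y^i_k]$ graded by $\deg x^i_j=\deg y^i_k=\mathbf{a}^i$ and homogeneous ideals $I,J$, $I\times_{\mathcal{A}}J$ is the kernel of $\mathbb{K}[z^i_{jk}]\to\mathbb{K}[x]/I\otimes_{\mathbb{K}}\mathbb{K}[y]/J$, $z^i_{jk}\mapsto x^i_j\otimes y^i_k$. *)

theory Defs
  imports "HOL-Library.Poly_Mapping" "HOL-Library.FuncSet"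
begin

text \<open>The polynomial ring in a set X of variables is the set of polynomials all of whose
variables lie in X.\<close>

type_synonym ('v, 'k) mpoly = "('v \<Rightarrow>\<^sub>0 nat) \<Rightarrow>\<^sub>0 'k"

definition Var :: "'v \<Rightarrow> ('v, 'k::comm_ring_1) mpoly" where
  "Var v = Poly_Mapping.single (Poly_Mapping.single v 1) 1"

definition Const :: "'k::comm_ring_1 \<Rightarrow> ('v, 'k) mpoly" where
  "Const c = Poly_Mapping.single 0 c"

definition vars :: "('v, 'k::zero) mpoly \<Rightarrow> 'v set" where
  "vars p = \<Union> (Poly_Mapping.keys ` Poly_Mapping.keys p)"

definition mp_subst :: "('v \<Rightarrow> ('w, 'k::comm_ring_1) mpoly) \<Rightarrow> ('v, 'k) mpoly \<Rightarrow> ('w, 'k) mpoly" where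
  "mp_subst f p = (\<Sum>m\<in>Poly_Mapping.keys p. Const (Poly_Mapping.lookup p m) * (\<Prod>v\<in>Poly_Mapping.keys m. f v ^ Poly_Mapping.lookup m v))"

definition mp_rename :: "('v \<Rightarrow> 'w) \<Rightarrow> ('v, 'k::comm_ring_1) mpoly \<Rightarrow> ('w, 'k) mpoly" where
  "mp_rename g p = mp_subst (\<lambda>v. Var (g v)) p"

definition ideal_gen :: "('v, 'k::comm_ring_1) mpoly set \<Rightarrow> ('v, 'k) mpoly set" where
  "ideal_gen S = {\<Sum>s\<in>T. c s * s | T c. finite T \<and> T \<subseteq> S}"

definition mdeg :: "('v \<Rightarrow> 'c \<Rightarrow> int) \<Rightarrow> ('v \<Rightarrow>\<^sub>0 nat) \<Rightarrow> 'c \<Rightarrow> int" where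
  "mdeg deg m = (\<lambda>\<tau>. \<Sum>v\<in>Poly_Mapping.keys m. int (Poly_Mapping.lookup m v) * deg v \<tau>)"

definition hcomp :: "('v \<Rightarrow> 'c \<Rightarrow> int) \<Rightarrow> ('c \<Rightarrow> int) \<Rightarrow> ('v, 'k::zero) mpoly \<Rightarrow> ('v, 'k) mpoly" where
  "hcomp deg a f = Abs_poly_mapping (\<lambda>m. Poly_Mapping.lookup f m when mdeg deg m = a)"

definition homogeneous_ideal ::
  "('v \<Rightarrow> 'c \<Rightarrow> int) \<Rightarrow> 'v set \<Rightarrow> ('v, 'k::comm_ring_1) mpoly set \<Rightarrow> bool" where
  "homogeneous_ideal deg X I \<longleftrightarrow>
     I \<subseteq> {f. vars f \<subseteq> X} \<and> 0 \<in> I \<and>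
     (\<forall>f\<in>I. \<forall>g\<in>I. f + g \<in> I) \<and>
     (\<forall>f\<in>I. \<forall>h. vars h \<subseteq> X \<longrightarrow> h * f \<in> I) \<and>
     (\<forall>f\<in>I. \<forall>a. hcomp deg a f \<in> I)"

text \<open>The toric fiber product is the
kernel of K[z] -> K[X]/I \<otimes> K[Y]/J, z_(x,y) |-> x \<otimes> y, where the tensor
product is identified with K[X \<squnion> Y]/(I + J) (disjoint union via Inl/Inr).\<close>
definition toric_fiber_product ::
  "('a \<Rightarrow> 'c \<Rightarrow> int) \<Rightarrow> 'a set \<Rightarrow> ('b \<Rightarrow> 'c \<Rightarrow> int) \<Rightarrow> 'b set \<Rightarrow>
   ('a, 'k::comm_ring_1) mpoly set \<Rightarrow> ('b, 'k) mpoly set \<Rightarrow> ('a \<times> 'b, 'k) mpoly set" where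
  "toric_fiber_product deg1 X deg2 Y I J =
     {f. vars f \<subseteq> {(x, y). x \<in> X \<and> y \<in> Y \<and> deg1 x = deg2 y} \<and>
         mp_subst (\<lambda>(x, y). Var (Inl x) * Var (Inr y)) f
           \<in> ideal_gen (mp_rename Inl ` I \<union> mp_rename Inr ` J)}"

definition simplicial_complex :: "nat set \<Rightarrow> nat set set \<Rightarrow> bool" where
  "simplicial_complex V \<Delta> \<longleftrightarrow> (\<forall>F\<in>\<Delta>. F \<subseteq> V) \<and> (\<forall>F\<in>\<Delta>. \<forall>G. G \<subseteq> F \<longrightarrow> G \<in> \<Delta>)"

definition facets :: "nat set set \<Rightarrow> nat set set" where
  "facets \<Delta> = {F\<in>\<Delta>. \<forall>G\<in>\<Delta>. F \<subseteq> G \<longrightarrow> G = F}"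

text \<open>D_F = prod_{k in F} [d_k]; index vectors are extensional functions on F.\<close>
definition Dset :: "(nat \<Rightarrow> nat) \<Rightarrow> nat set \<Rightarrow> (nat \<Rightarrow> nat) set" where
  "Dset d F = (\<Pi>\<^sub>E k\<in>F. {1..d k})"

text \<open>phi_{Delta,d}: p_i |-> prod_{F facet} a^F_{i_F}; variables a^F_j are pairs (F, j).\<close>
definition phi_map :: "nat set set \<Rightarrow> (nat \<Rightarrow> nat) \<Rightarrow> (nat set \<times> (nat \<Rightarrow> nat), 'k::comm_ring_1) mpoly" where
  "phi_map \<Delta> i = (\<Prod>F\<in>facets \<Delta>. Var (F, restrict i F))"

definition psi_map :: "(nat \<Rightarrow> nat) \<Rightarrow> nat set \<Rightarrow> (nat \<Rightarrow> nat) \<Rightarrow> (nat \<Rightarrow> nat, 'k::comm_ring_1) mpoly" where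
  "psi_map d H i = (\<Sum>j\<in>Dset d H. Var (\<lambda>k. if k \<in> H then j k else i k))"

definition hidden_ideal :: "nat set \<Rightarrow> nat set set \<Rightarrow> (nat \<Rightarrow> nat) \<Rightarrow> (nat \<Rightarrow> nat, 'k::comm_ring_1) mpoly set" where
  "hidden_ideal H \<Delta> d =
     {f. vars f \<subseteq> Dset d (\<Union>\<Delta> - H) \<and>
         mp_subst (phi_map \<Delta>) (mp_subst (psi_map d H) f) = (0 :: (_, 'k) mpoly)}"

definition unitvec :: "(nat \<Rightarrow> nat) \<Rightarrow> (nat \<Rightarrow> nat) \<Rightarrow> int" where
  "unitvec \<sigma> = (\<lambda>\<tau>. if \<tau> = \<sigma> then 1 else 0)"

end

(* The hidden variable ideal is the kernel of the parametrization
     q_i |-> sum_{j in D_H} prod_{F facet of Delta} a^F_{(i,j)|F}.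
   As H avoids the separator S, the hidden vertices split between the two components and the
   hidden sum factors into the hidden sums of Delta_1 and Delta_2.  The facets of Delta are those
   of Delta_1 and Delta_2, except possibly S, whose parameters can be absorbed into a facet of
   Delta containing S; this gives substitutions in both directions, so the parametrization of
   Delta has the same kernel as the product of the parametrizations of the components.  The
   index vectors i are the pairs (i|1, i|2) agreeing on S, i.e. of equal degree e_{i|S}, and over
   a field the kernel of a tensor product of two substitutions is generated by the two kernels:
   this is the toric fiber product.  Homogeneity holds because the parametrization becomes
   graded when the parameters of one facet containing S get degree e_{j|S}. *)

theory Submission
  imports Defs
begin

section \<open>Polynomial substitutions\<close>

lemma poly_mapping_sum_single:
  fixes p :: "'a \<Rightarrow>\<^sub>0 'b::comm_monoid_add"
  shows "(\<Sum>m\<in>Poly_Mapping.keys p. Poly_Mapping.single m (Poly_Mapping.lookup p m)) = p"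
proof (rule poly_mapping_eqI)
  fix k
  have "Poly_Mapping.lookup (\<Sum>m\<in>Poly_Mapping.keys p. Poly_Mapping.single m (Poly_Mapping.lookup p m)) k
      = (\<Sum>m\<in>Poly_Mapping.keys p. Poly_Mapping.lookup p m when m = k)"
    by (simp add: lookup_sum lookup_single)
  also have "\<dots> = Poly_Mapping.lookup p k"
    by (cases "k \<in> Poly_Mapping.keys p") (auto simp: when_def in_keys_iff)
  finally show "Poly_Mapping.lookup (\<Sum>m\<in>Poly_Mapping.keys p. Poly_Mapping.single m (Poly_Mapping.lookup p m)) k
      = Poly_Mapping.lookup p k" .
qed

lemma Const_0 [simp]: "Const 0 = 0"
  by (simp add: Const_def)

lemma Const_1 [simp]: "Const 1 = 1"
  by (simp add: Const_def)

lemma Const_add: "Const (a + b) = Const a + Const b"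
  by (simp add: Const_def single_add)

lemma Const_mult: "Const (a * b) = Const a * Const b"
  by (simp add: Const_def mult_single)

lemma Const_mult_single: "Const c * Poly_Mapping.single m a = Poly_Mapping.single m (c * a)"
  by (simp add: Const_def mult_single)

lemma lookup_Const_mult: "Poly_Mapping.lookup (Const c * p) m = c * Poly_Mapping.lookup p m"
proof -
  have "Const c * p = (\<Sum>n\<in>Poly_Mapping.keys p. Poly_Mapping.single n (c * Poly_Mapping.lookup p n))"
    by (subst (1) poly_mapping_sum_single[symmetric]) (simp add: sum_distrib_left Const_mult_single)
  then show ?thesis
    by (cases "m \<in> Poly_Mapping.keys p") (auto simp: lookup_sum lookup_single when_def in_keys_iff)
qed

lemma Var_power:
  "(Var v :: ('v, 'k::comm_ring_1) mpoly) ^ e = Poly_Mapping.single (Poly_Mapping.single v e) 1"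
  by (induction e) (simp_all add: Var_def mult_single single_add[symmetric])

lemma prod_single_1:
  "(\<Prod>x\<in>A. Poly_Mapping.single (m x) (1::'k::comm_ring_1)) = Poly_Mapping.single (\<Sum>x\<in>A. m x) 1"
  by (induction A rule: infinite_finite_induct) (auto simp: mult_single)

definition monom_eval :: "('v \<Rightarrow> ('w, 'k::comm_ring_1) mpoly) \<Rightarrow> ('v \<Rightarrow>\<^sub>0 nat) \<Rightarrow> ('w, 'k) mpoly" where
  "monom_eval f m = (\<Prod>v\<in>Poly_Mapping.keys m. f v ^ Poly_Mapping.lookup m v)"

lemma monom_eval_superset:
  assumes "finite A" "Poly_Mapping.keys m \<subseteq> A"
  shows "monom_eval f m = (\<Prod>v\<in>A. f v ^ Poly_Mapping.lookup m v)"
  unfolding monom_eval_def using assms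
  by (intro prod.mono_neutral_left) (auto simp: in_keys_iff)

lemma monom_eval_add: "monom_eval f (m1 + m2) = monom_eval f m1 * monom_eval f m2"
proof -
  let ?A = "Poly_Mapping.keys m1 \<union> Poly_Mapping.keys m2"
  have "monom_eval f (m1 + m2) = (\<Prod>v\<in>?A. f v ^ Poly_Mapping.lookup (m1 + m2) v)"
    by (rule monom_eval_superset) (use keys_add[of m1 m2] in auto)
  also have "\<dots> = (\<Prod>v\<in>?A. f v ^ Poly_Mapping.lookup m1 v) * (\<Prod>v\<in>?A. f v ^ Poly_Mapping.lookup m2 v)"
    by (simp add: lookup_add power_add prod.distrib)
  also have "\<dots> = monom_eval f m1 * monom_eval f m2"
    by (subst (1 2) monom_eval_superset[symmetric]) auto
  finally show ?thesis .
qed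

lemma monom_eval_0 [simp]: "monom_eval f 0 = 1"
  by (simp add: monom_eval_def)

lemma monom_eval_single: "monom_eval f (Poly_Mapping.single v e) = f v ^ e"
  by (simp add: monom_eval_def)

lemma monom_eval_cong:
  "(\<And>v. v \<in> Poly_Mapping.keys m \<Longrightarrow> f v = g v) \<Longrightarrow> monom_eval f m = monom_eval g m"
  unfolding monom_eval_def by (intro prod.cong) auto

lemma monom_eval_Var: "monom_eval Var m = (Poly_Mapping.single m 1 :: ('v, 'k::comm_ring_1) mpoly)"
  unfolding monom_eval_def Var_power prod_single_1 poly_mapping_sum_single ..

lemma mp_subst_monom_eval:
  "mp_subst f p = (\<Sum>m\<in>Poly_Mapping.keys p. Const (Poly_Mapping.lookup p m) * monom_eval f m)"
  unfolding mp_subst_def monom_eval_def ..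

lemma mp_subst_superset:
  assumes "finite A" "Poly_Mapping.keys p \<subseteq> A"
  shows "mp_subst f p = (\<Sum>m\<in>A. Const (Poly_Mapping.lookup p m) * monom_eval f m)"
  unfolding mp_subst_monom_eval using assms
  by (intro sum.mono_neutral_left) (auto simp: in_keys_iff)

lemma mp_subst_0 [simp]: "mp_subst f 0 = 0"
  by (simp add: mp_subst_def)

lemma mp_subst_single: "mp_subst f (Poly_Mapping.single m c) = Const c * monom_eval f m"
  by (subst mp_subst_superset[of "{m}"]) auto

lemma mp_subst_add: "mp_subst f (p + q) = mp_subst f p + mp_subst f q"
proof -
  let ?A = "Poly_Mapping.keys p \<union> Poly_Mapping.keys q"
  have "mp_subst f (p + q) = (\<Sum>m\<in>?A. Const (Poly_Mapping.lookup (p + q) m) * monom_eval f m)"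
    by (rule mp_subst_superset) (use keys_add[of p q] in auto)
  also have "\<dots> = (\<Sum>m\<in>?A. Const (Poly_Mapping.lookup p m) * monom_eval f m)
                + (\<Sum>m\<in>?A. Const (Poly_Mapping.lookup q m) * monom_eval f m)"
    by (simp add: lookup_add Const_add distrib_right sum.distrib)
  also have "\<dots> = mp_subst f p + mp_subst f q"
    by (subst (1 2) mp_subst_superset[symmetric]) auto
  finally show ?thesis .
qed

lemma mp_subst_sum: "mp_subst f (sum g A) = (\<Sum>x\<in>A. mp_subst f (g x))"
  by (induction A rule: infinite_finite_induct) (auto simp: mp_subst_add)

lemma mp_subst_diff: "mp_subst f (p - q) = mp_subst f p - mp_subst f q"
  by (metis add_diff_cancel diff_add_cancel mp_subst_add)

lemma mp_subst_mult: "mp_subst f (p * q) = mp_subst f p * mp_subst f q"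
proof -
  have "p * q = (\<Sum>m\<in>Poly_Mapping.keys p. \<Sum>n\<in>Poly_Mapping.keys q.
           Poly_Mapping.single (m + n) (Poly_Mapping.lookup p m * Poly_Mapping.lookup q n))"
    by (subst (1) poly_mapping_sum_single[symmetric], subst (1) poly_mapping_sum_single[symmetric])
      (simp add: sum_product mult_single)
  then have "mp_subst f (p * q) = (\<Sum>m\<in>Poly_Mapping.keys p. \<Sum>n\<in>Poly_Mapping.keys q.
           Const (Poly_Mapping.lookup p m * Poly_Mapping.lookup q n) * monom_eval f (m + n))"
    by (simp add: mp_subst_sum mp_subst_single)
  also have "\<dots> = mp_subst f p * mp_subst f q"
    unfolding mp_subst_monom_eval sum_product
    by (intro sum.cong refl) (simp add: monom_eval_add Const_mult algebra_simps)
  finally show ?thesis .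
qed

lemma mp_subst_Const [simp]: "mp_subst f (Const c) = Const c"
  by (simp add: Const_def mp_subst_single)

lemma mp_subst_1 [simp]: "mp_subst f 1 = 1"
  using mp_subst_Const[of f 1] by simp

lemma mp_subst_Var [simp]: "mp_subst f (Var v) = f v"
  by (simp add: Var_def mp_subst_single monom_eval_single)

lemma mp_subst_power: "mp_subst f (p ^ n) = mp_subst f p ^ n"
  by (induction n) (auto simp: mp_subst_mult)

lemma mp_subst_prod: "mp_subst f (prod g A) = (\<Prod>x\<in>A. mp_subst f (g x))"
  by (induction A rule: infinite_finite_induct) (auto simp: mp_subst_mult)

lemma mp_subst_mp_subst: "mp_subst g (mp_subst f p) = mp_subst (\<lambda>v. mp_subst g (f v)) p"
  by (simp add: mp_subst_monom_eval[of f] mp_subst_monom_eval[of "\<lambda>v. mp_subst g (f v)"]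
      mp_subst_sum mp_subst_mult monom_eval_def mp_subst_prod mp_subst_power)

lemma mp_subst_cong:
  "(\<And>v. v \<in> vars p \<Longrightarrow> f v = g v) \<Longrightarrow> mp_subst f p = mp_subst g p"
  unfolding mp_subst_monom_eval
  by (intro sum.cong refl arg_cong2[where f = times] monom_eval_cong) (auto simp: vars_def)

lemma mp_subst_Var_id: "mp_subst Var p = p"
  unfolding mp_subst_monom_eval monom_eval_Var Const_mult_single
  by (simp add: poly_mapping_sum_single)

lemma mp_subst_eq_0_iff_of_mutual_factorization:
  assumes "\<And>v. mp_subst \<rho> (\<Phi>' v) = \<Phi> v" and "\<And>v. mp_subst \<sigma> (\<Phi> v) = \<Phi>' v"
  shows "mp_subst \<Phi> p = 0 \<longleftrightarrow> mp_subst \<Phi>' p = 0"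
  by (metis assms mp_subst_mp_subst mp_subst_0 ext)

lemma vars_add: "vars (p + q) \<subseteq> vars p \<union> vars q"
  unfolding vars_def using keys_add[of p q] by auto

lemma vars_mult: "vars (p * q) \<subseteq> vars p \<union> vars q"
proof
  fix v assume "v \<in> vars (p * q)"
  then obtain m where m: "m \<in> Poly_Mapping.keys (p * q)" "v \<in> Poly_Mapping.keys m"
    by (auto simp: vars_def)
  from m(1) keys_mult[of p q] obtain a b
    where "m = a + b" "a \<in> Poly_Mapping.keys p" "b \<in> Poly_Mapping.keys q"
    by blast
  with m(2) keys_add[of a b] show "v \<in> vars p \<union> vars q"
    by (auto simp: vars_def)
qed

lemma vars_Const [simp]: "vars (Const c) = {}"
  by (simp add: vars_def Const_def)

lemma vars_Var: "vars (Var v :: ('v, 'k::comm_ring_1) mpoly) \<subseteq> {v}"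
  by (simp add: vars_def Var_def)

lemma vars_sum: "vars (sum f A) \<subseteq> (\<Union>x\<in>A. vars (f x))"
proof (induction A rule: infinite_finite_induct)
  case (insert x F)
  then show ?case using vars_add[of "f x" "sum f F"] by auto
qed (auto simp: vars_def)

lemma vars_prod: "vars (prod f A :: ('v, 'k::comm_ring_1) mpoly) \<subseteq> (\<Union>x\<in>A. vars (f x))"
proof (induction A rule: infinite_finite_induct)
  case (insert x F)
  then show ?case using vars_mult[of "f x" "prod f F"] by auto
qed (use vars_Const[of 1] in auto)

lemma vars_power: "vars ((p :: ('v, 'k::comm_ring_1) mpoly) ^ n) \<subseteq> vars p"
proof (induction n)
  case (Suc n)
  then show ?case using vars_mult[of p "p ^ n"] by auto
qed (use vars_Const[of 1] in auto)

lemma vars_diff: "vars ((p :: ('v, 'k::comm_ring_1) mpoly) - q) \<subseteq> vars p \<union> vars q"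
  using vars_add[of p "- q"] by (simp add: vars_def keys_minus)

lemma vars_Const_mult: "vars (Const c * p) \<subseteq> vars p"
  using vars_mult[of "Const c" p] by simp

lemma vars_monom_eval: "vars (monom_eval f m) \<subseteq> (\<Union>v\<in>Poly_Mapping.keys m. vars (f v))"
  unfolding monom_eval_def using vars_prod vars_power by fastforce

lemma vars_mp_subst: "vars (mp_subst f p) \<subseteq> (\<Union>v\<in>vars p. vars (f v))"
proof -
  have "vars (mp_subst f p)
      \<subseteq> (\<Union>m\<in>Poly_Mapping.keys p. vars (Const (Poly_Mapping.lookup p m) * monom_eval f m))"
    unfolding mp_subst_monom_eval by (rule vars_sum)
  also have "\<dots> \<subseteq> (\<Union>m\<in>Poly_Mapping.keys p. \<Union>v\<in>Poly_Mapping.keys m. vars (f v))"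
    using vars_Const_mult vars_monom_eval by fastforce
  also have "\<dots> = (\<Union>v\<in>vars p. vars (f v))"
    by (auto simp: vars_def)
  finally show ?thesis .
qed

lemma vars_mp_rename: "vars (mp_rename g p) \<subseteq> g ` vars p"
  unfolding mp_rename_def using vars_mp_subst[of "\<lambda>v. Var (g v)" p] vars_Var by fastforce

lemma mp_rename_id_on: "(\<And>v. v \<in> vars p \<Longrightarrow> g v = v) \<Longrightarrow> mp_rename g p = p"
  unfolding mp_rename_def using mp_subst_cong[of p "\<lambda>v. Var (g v)" Var] mp_subst_Var_id by metis

lemma mp_rename_0 [simp]: "mp_rename g 0 = 0"
  by (simp add: mp_rename_def)

lemma mp_rename_Var [simp]: "mp_rename g (Var v) = Var (g v)"
  by (simp add: mp_rename_def)

lemma mp_rename_Const [simp]: "mp_rename g (Const c) = Const c"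
  by (simp add: mp_rename_def)

lemma mp_rename_diff: "mp_rename g (p - q) = mp_rename g p - mp_rename g q"
  by (simp add: mp_rename_def mp_subst_diff)

lemma mp_rename_mult: "mp_rename g (p * q) = mp_rename g p * mp_rename g q"
  by (simp add: mp_rename_def mp_subst_mult)

lemma mp_rename_sum: "mp_rename g (sum f A) = (\<Sum>x\<in>A. mp_rename g (f x))"
  by (simp add: mp_rename_def mp_subst_sum)

lemma mp_rename_prod: "mp_rename g (prod f A) = (\<Prod>x\<in>A. mp_rename g (f x))"
  by (simp add: mp_rename_def mp_subst_prod)

lemma mp_subst_mp_rename: "mp_subst f (mp_rename h p) = mp_subst (\<lambda>v. f (h v)) p"
  by (simp add: mp_rename_def mp_subst_mp_subst)

lemma mp_rename_mp_subst: "mp_rename g (mp_subst f p) = mp_subst (\<lambda>v. mp_rename g (f v)) p"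
  by (simp add: mp_rename_def mp_subst_mp_subst)

lemma mp_rename_mp_rename: "mp_rename g (mp_rename h p) = mp_rename (\<lambda>v. g (h v)) p"
  by (simp add: mp_rename_def mp_subst_mp_subst)

definition monom_rename :: "('a \<Rightarrow> 'b) \<Rightarrow> ('a \<Rightarrow>\<^sub>0 nat) \<Rightarrow> ('b \<Rightarrow>\<^sub>0 nat)" where
  "monom_rename g m = (\<Sum>v\<in>Poly_Mapping.keys m. Poly_Mapping.single (g v) (Poly_Mapping.lookup m v))"

lemma mp_rename_eq_sum_single:
  "mp_rename g p = (\<Sum>m\<in>Poly_Mapping.keys p.
     Poly_Mapping.single (monom_rename g m) (Poly_Mapping.lookup p m) :: ('b, 'k::comm_ring_1) mpoly)"
proof -
  have single: "mp_rename g (Poly_Mapping.single m c) =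
      (Poly_Mapping.single (monom_rename g m) c :: ('b, 'k) mpoly)" for m c
    by (simp add: mp_rename_def mp_subst_single monom_eval_def Var_power prod_single_1
        monom_rename_def Const_mult_single)
  have "mp_rename g p = mp_rename g
      (\<Sum>m\<in>Poly_Mapping.keys p. Poly_Mapping.single m (Poly_Mapping.lookup p m))"
    by (simp add: poly_mapping_sum_single)
  then show ?thesis
    by (simp add: mp_rename_sum single)
qed

lemma lookup_monom_rename_inj:
  assumes "inj g"
  shows "Poly_Mapping.lookup (monom_rename g m) (g v) = Poly_Mapping.lookup m v"
proof -
  have "Poly_Mapping.lookup (monom_rename g m) (g v)
      = (\<Sum>w\<in>Poly_Mapping.keys m. Poly_Mapping.lookup m w when w = v)"
    unfolding monom_rename_def lookup_sum lookup_single using assms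
    by (intro sum.cong refl) (auto simp: when_def inj_eq)
  also have "\<dots> = Poly_Mapping.lookup m v"
    by (cases "v \<in> Poly_Mapping.keys m") (auto simp: when_def in_keys_iff)
  finally show ?thesis .
qed

lemma lookup_monom_rename_notin_range:
  "w \<notin> range g \<Longrightarrow> Poly_Mapping.lookup (monom_rename g m) w = 0"
  unfolding monom_rename_def lookup_sum lookup_single by (auto simp: when_def)

section \<open>Ideals, kernels and homogeneity\<close>

lemma ideal_gen_0: "0 \<in> ideal_gen S"
  unfolding ideal_gen_def by (rule CollectI, rule exI[of _ "{}"]) auto

lemma ideal_gen_mult_generator: "s \<in> S \<Longrightarrow> c * s \<in> ideal_gen S"
  unfolding ideal_gen_def
  by (rule CollectI, rule exI[of _ "{s}"], rule exI[of _ "\<lambda>_. c"]) auto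

lemma ideal_gen_add:
  assumes "x \<in> ideal_gen S" "y \<in> ideal_gen S"
  shows "x + y \<in> ideal_gen S"
proof -
  from assms obtain T1 c1 T2 c2 where
    x: "x = (\<Sum>s\<in>T1. c1 s * s)" "finite T1" "T1 \<subseteq> S" and
    y: "y = (\<Sum>s\<in>T2. c2 s * s)" "finite T2" "T2 \<subseteq> S"
    unfolding ideal_gen_def by blast
  define c where "c s = (if s \<in> T1 then c1 s else 0) + (if s \<in> T2 then c2 s else 0)" for s
  have "(\<Sum>s\<in>T1 \<union> T2. c s * s)
      = (\<Sum>s\<in>T1 \<union> T2. if s \<in> T1 then c1 s * s else 0) + (\<Sum>s\<in>T1 \<union> T2. if s \<in> T2 then c2 s * s else 0)"
    unfolding c_def sum.distrib[symmetric] by (intro sum.cong refl) (simp add: distrib_right)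
  also have "\<dots> = x + y"
    using x y by (simp add: sum.If_cases Int_absorb1 Int_absorb2)
  finally have "x + y = (\<Sum>s\<in>T1 \<union> T2. c s * s) \<and> finite (T1 \<union> T2) \<and> T1 \<union> T2 \<subseteq> S"
    using x y by simp
  then show ?thesis
    unfolding ideal_gen_def by blast
qed

lemma ideal_gen_sum: "(\<And>i. i \<in> A \<Longrightarrow> f i \<in> ideal_gen S) \<Longrightarrow> sum f A \<in> ideal_gen S"
  by (induction A rule: infinite_finite_induct) (auto simp: ideal_gen_0 ideal_gen_add)

lemma mp_subst_ideal_gen_eq_0:
  assumes "x \<in> ideal_gen S" "\<And>s. s \<in> S \<Longrightarrow> mp_subst \<Psi> s = 0"
  shows "mp_subst \<Psi> x = 0"
proof -
  from assms(1) obtain T c where "x = (\<Sum>s\<in>T. c s * s)" "T \<subseteq> S"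
    unfolding ideal_gen_def by blast
  with assms(2) show ?thesis
    by (auto simp: mp_subst_sum mp_subst_mult intro!: sum.neutral)
qed

definition subst_kernel :: "('v \<Rightarrow> ('w, 'k::comm_ring_1) mpoly) \<Rightarrow> 'v set \<Rightarrow> ('v, 'k) mpoly set" where
  "subst_kernel \<Psi> X = {f. vars f \<subseteq> X \<and> mp_subst \<Psi> f = 0}"

definition homogeneous :: "('v \<Rightarrow> 'c \<Rightarrow> int) \<Rightarrow> ('c \<Rightarrow> int) \<Rightarrow> ('v, 'k::zero) mpoly \<Rightarrow> bool" where
  "homogeneous deg a p \<longleftrightarrow> (\<forall>m\<in>Poly_Mapping.keys p. mdeg deg m = a)"

lemma mdeg_add: "mdeg deg (m1 + m2) = (\<lambda>\<tau>. mdeg deg m1 \<tau> + mdeg deg m2 \<tau>)"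
proof -
  let ?A = "Poly_Mapping.keys m1 \<union> Poly_Mapping.keys m2"
  have "mdeg deg m = (\<lambda>\<tau>. \<Sum>v\<in>?A. int (Poly_Mapping.lookup m v) * deg v \<tau>)"
    if "Poly_Mapping.keys m \<subseteq> ?A" for m
    unfolding mdeg_def using that by (intro ext sum.mono_neutral_left) (auto simp: in_keys_iff)
  from this[of "m1 + m2"] this[of m1] this[of m2] show ?thesis
    using keys_add[of m1 m2] by (auto simp: lookup_add algebra_simps sum.distrib)
qed

lemma homogeneous_add: "homogeneous deg a p \<Longrightarrow> homogeneous deg a q \<Longrightarrow> homogeneous deg a (p + q)"
  unfolding homogeneous_def using keys_add[of p q] by blast

lemma homogeneous_sum:
  "(\<And>x. x \<in> A \<Longrightarrow> homogeneous deg a (f x)) \<Longrightarrow> homogeneous deg a (sum f A)"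
proof (induction A rule: infinite_finite_induct)
  case (insert x F)
  then show ?case by (simp add: homogeneous_add)
qed (simp_all add: homogeneous_def)

lemma homogeneous_mult:
  "homogeneous deg a p \<Longrightarrow> homogeneous deg b q \<Longrightarrow> homogeneous deg (\<lambda>\<tau>. a \<tau> + b \<tau>) (p * q)"
  unfolding homogeneous_def using keys_mult[of p q] by (fastforce simp: mdeg_add)

lemma homogeneous_1: "homogeneous deg (\<lambda>_. 0) (1 :: ('v, 'k::comm_ring_1) mpoly)"
  by (simp add: homogeneous_def mdeg_def)

lemma homogeneous_Var: "homogeneous deg (deg v) (Var v)"
  by (simp add: homogeneous_def Var_def mdeg_def)

lemma homogeneous_prod:
  assumes "\<And>i. i \<in> A \<Longrightarrow> homogeneous deg (a i) (f i)"
  shows "homogeneous deg (\<lambda>\<tau>. \<Sum>i\<in>A. a i \<tau>) (prod f A :: ('v, 'k::comm_ring_1) mpoly)"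
  using assms
proof (induction A rule: infinite_finite_induct)
  case (insert x F)
  then show ?case
    using homogeneous_mult[of deg "a x" "f x" "\<lambda>\<tau>. \<Sum>i\<in>F. a i \<tau>" "prod f F"] by simp
qed (simp_all add: homogeneous_1)

lemma homogeneous_power:
  fixes p :: "('v, 'k::comm_ring_1) mpoly"
  assumes "homogeneous deg a p"
  shows "homogeneous deg (\<lambda>\<tau>. int n * a \<tau>) (p ^ n)"
proof (induction n)
  case (Suc n)
  then show ?case using homogeneous_mult[OF assms Suc] by (simp add: algebra_simps)
qed (simp add: homogeneous_1)

lemma homogeneous_monom_eval:
  assumes "\<And>v. v \<in> Poly_Mapping.keys m \<Longrightarrow> homogeneous deg' (deg v) (f v)"
  shows "homogeneous deg' (mdeg deg m) (monom_eval f m)"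
  unfolding monom_eval_def mdeg_def using assms by (intro homogeneous_prod homogeneous_power) auto

lemma lookup_hcomp: "Poly_Mapping.lookup (hcomp deg a f) m = (Poly_Mapping.lookup f m when mdeg deg m = a)"
proof -
  have "finite {m. (Poly_Mapping.lookup f m when mdeg deg m = a) \<noteq> 0}"
    by (rule finite_subset[of _ "Poly_Mapping.keys f"]) (auto simp: in_keys_iff)
  then show ?thesis unfolding hcomp_def by simp
qed

lemma keys_hcomp: "Poly_Mapping.keys (hcomp deg a f) \<subseteq> Poly_Mapping.keys f"
  by (auto simp: in_keys_iff lookup_hcomp)

lemma vars_hcomp: "vars (hcomp deg a f) \<subseteq> vars f"
  unfolding vars_def using keys_hcomp by blast

lemma hcomp_0 [simp]: "hcomp deg a 0 = 0"
  by (rule poly_mapping_eqI) (simp add: lookup_hcomp)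

lemma hcomp_add: "hcomp deg a (p + q) = hcomp deg a p + hcomp deg a q"
  by (rule poly_mapping_eqI) (simp add: lookup_hcomp lookup_add when_def)

lemma hcomp_sum: "hcomp deg a (sum f A) = (\<Sum>x\<in>A. hcomp deg a (f x))"
  by (induction A rule: infinite_finite_induct)
    (auto intro!: poly_mapping_eqI simp: lookup_hcomp hcomp_add)

lemma hcomp_Const_mult_homogeneous:
  assumes "homogeneous deg b p"
  shows "hcomp deg a (Const c * p) = (if b = a then Const c * p else 0)"
  using assms by (intro poly_mapping_eqI)
    (auto simp: lookup_hcomp lookup_Const_mult when_def homogeneous_def in_keys_iff)

lemma mp_subst_hcomp:
  assumes hom: "\<And>v. v \<in> X \<Longrightarrow> homogeneous deg' (deg v) (\<Psi> v)" and vf: "vars f \<subseteq> X"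
  shows "mp_subst \<Psi> (hcomp deg a f) = hcomp deg' a (mp_subst \<Psi> f)"
proof -
  have "mp_subst \<Psi> (hcomp deg a f)
     = (\<Sum>m\<in>Poly_Mapping.keys f. Const (Poly_Mapping.lookup (hcomp deg a f) m) * monom_eval \<Psi> m)"
    by (rule mp_subst_superset) (auto intro: keys_hcomp[THEN subsetD])
  also have "\<dots> = (\<Sum>m\<in>Poly_Mapping.keys f. hcomp deg' a (Const (Poly_Mapping.lookup f m) * monom_eval \<Psi> m))"
  proof (intro sum.cong refl)
    fix m assume "m \<in> Poly_Mapping.keys f"
    then have "homogeneous deg' (mdeg deg m) (monom_eval \<Psi> m)"
      using vf by (intro homogeneous_monom_eval hom) (auto simp: vars_def)
    then show "Const (Poly_Mapping.lookup (hcomp deg a f) m) * monom_eval \<Psi> m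
        = hcomp deg' a (Const (Poly_Mapping.lookup f m) * monom_eval \<Psi> m)"
      by (simp add: hcomp_Const_mult_homogeneous lookup_hcomp when_def)
  qed
  also have "\<dots> = hcomp deg' a (mp_subst \<Psi> f)"
    by (simp add: mp_subst_monom_eval hcomp_sum)
  finally show ?thesis .
qed

lemma homogeneous_ideal_subst_kernel:
  fixes \<Psi> :: "'v \<Rightarrow> ('w, 'k::comm_ring_1) mpoly"
  assumes hom: "\<And>v. v \<in> X \<Longrightarrow> homogeneous deg' (deg v) (\<Psi> v)"
  shows "homogeneous_ideal deg X (subst_kernel \<Psi> X)"
proof -
  let ?K = "subst_kernel \<Psi> X"
  have "f + g \<in> ?K" if "f \<in> ?K" "g \<in> ?K" for f g
    using that vars_add[of f g] by (auto simp: subst_kernel_def mp_subst_add)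
  moreover have "h * f \<in> ?K" if "f \<in> ?K" "vars h \<subseteq> X" for f h
    using that vars_mult[of h f] by (auto simp: subst_kernel_def mp_subst_mult)
  moreover have "hcomp deg a f \<in> ?K" if "f \<in> ?K" for f a
    using that vars_hcomp[of deg a f] mp_subst_hcomp[of X deg' deg \<Psi> f a] hom
    by (auto simp: subst_kernel_def)
  ultimately show ?thesis
    unfolding homogeneous_ideal_def by (auto simp: subst_kernel_def vars_def)
qed

section \<open>The kernel of a tensor product of substitutions\<close>

definition sum_ideal :: "('a, 'k::comm_ring_1) mpoly set \<Rightarrow> ('b, 'k) mpoly set \<Rightarrow> ('a + 'b, 'k) mpoly set" where
  "sum_ideal I J = ideal_gen (mp_rename Inl ` I \<union> mp_rename Inr ` J)"

definition tensor_subst ::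
  "('a \<Rightarrow> ('c, 'k::comm_ring_1) mpoly) \<Rightarrow> ('b \<Rightarrow> ('d, 'k) mpoly) \<Rightarrow> 'a + 'b \<Rightarrow> ('c + 'd, 'k) mpoly" where
  "tensor_subst \<Psi>1 \<Psi>2 = case_sum (\<lambda>x. mp_rename Inl (\<Psi>1 x)) (\<lambda>y. mp_rename Inr (\<Psi>2 y))"

lemma mp_subst_tensor_subst_Inl:
  "mp_subst (tensor_subst \<Psi>1 \<Psi>2) (mp_rename Inl p) = mp_rename Inl (mp_subst \<Psi>1 p)"
  by (simp add: tensor_subst_def mp_subst_mp_rename mp_rename_mp_subst)

lemma mp_subst_tensor_subst_Inr:
  "mp_subst (tensor_subst \<Psi>1 \<Psi>2) (mp_rename Inr q) = mp_rename Inr (mp_subst \<Psi>2 q)"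
  by (simp add: tensor_subst_def mp_subst_mp_rename mp_rename_mp_subst)

lemma mp_subst_tensor_subst_sum_ideal:
  "E \<in> sum_ideal (subst_kernel \<Psi>1 X) (subst_kernel \<Psi>2 Y) \<Longrightarrow> mp_subst (tensor_subst \<Psi>1 \<Psi>2) E = 0"
  unfolding sum_ideal_def
  by (erule mp_subst_ideal_gen_eq_0)
    (auto simp: subst_kernel_def mp_subst_tensor_subst_Inl mp_subst_tensor_subst_Inr)

lemma monom_rename_Inl_Inr_eq_iff:
  "monom_rename Inl m + monom_rename Inr n = monom_rename Inl m' + monom_rename Inr n'
    \<longleftrightarrow> m = m' \<and> n = n'"
proof
  assume eq: "monom_rename Inl m + monom_rename Inr n = monom_rename Inl m' + monom_rename Inr n'"
  show "m = m' \<and> n = n'"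
  proof (intro conjI poly_mapping_eqI)
    fix v
    from arg_cong[OF eq, of "\<lambda>M. Poly_Mapping.lookup M (Inl v)"]
    show "Poly_Mapping.lookup m v = Poly_Mapping.lookup m' v"
      by (simp add: lookup_add lookup_monom_rename_inj lookup_monom_rename_notin_range image_iff)
  next
    fix v
    from arg_cong[OF eq, of "\<lambda>M. Poly_Mapping.lookup M (Inr v)"]
    show "Poly_Mapping.lookup n v = Poly_Mapping.lookup n' v"
      by (simp add: lookup_add lookup_monom_rename_inj lookup_monom_rename_notin_range image_iff)
  qed
qed simp

lemma lookup_mp_rename_Inl_mult_Inr:
  fixes p :: "('a, 'k::comm_ring_1) mpoly" and q :: "('b, 'k) mpoly"
  shows "Poly_Mapping.lookup (mp_rename Inl p * mp_rename Inr q :: ('a + 'b, 'k) mpoly)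
      (monom_rename Inl m + monom_rename Inr n) = Poly_Mapping.lookup p m * Poly_Mapping.lookup q n"
proof -
  have "Poly_Mapping.lookup (mp_rename Inl p * mp_rename Inr q :: ('a + 'b, 'k) mpoly)
      (monom_rename Inl m + monom_rename Inr n)
     = (\<Sum>m'\<in>Poly_Mapping.keys p. \<Sum>n'\<in>Poly_Mapping.keys q.
          if m' = m \<and> n' = n then Poly_Mapping.lookup p m' * Poly_Mapping.lookup q n' else 0)"
    by (simp add: mp_rename_eq_sum_single[of Inl p] mp_rename_eq_sum_single[of Inr q] sum_product
        mult_single lookup_sum lookup_single when_def monom_rename_Inl_Inr_eq_iff)
  also have "\<dots> = (\<Sum>x\<in>Poly_Mapping.keys p \<times> Poly_Mapping.keys q.
      if x = (m, n) then Poly_Mapping.lookup p (fst x) * Poly_Mapping.lookup q (snd x) else 0)"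
    by (simp add: sum.cartesian_product case_prod_beta prod_eq_iff)
  also have "\<dots> = Poly_Mapping.lookup p m * Poly_Mapping.lookup q n"
    by (simp add: in_keys_iff)
  finally show ?thesis .
qed

lemma sum_tensor_eq_0_coefficients:
  fixes p :: "'i \<Rightarrow> ('a, 'k::comm_ring_1) mpoly" and q :: "'i \<Rightarrow> ('b, 'k) mpoly"
  assumes "(\<Sum>k\<in>K. mp_rename Inl (p k) * mp_rename Inr (q k) :: ('a + 'b, 'k) mpoly) = 0"
  shows "(\<Sum>k\<in>K. Const (Poly_Mapping.lookup (q k) n) * p k) = 0"
proof (rule poly_mapping_eqI)
  fix m
  have "Poly_Mapping.lookup (\<Sum>k\<in>K. Const (Poly_Mapping.lookup (q k) n) * p k) m
     = Poly_Mapping.lookup (\<Sum>k\<in>K. mp_rename Inl (p k) * mp_rename Inr (q k) :: ('a + 'b, 'k) mpoly)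
         (monom_rename Inl m + monom_rename Inr n)"
    by (simp add: lookup_sum lookup_Const_mult lookup_mp_rename_Inl_mult_Inr) (simp add: mult.commute)
  then show "Poly_Mapping.lookup (\<Sum>k\<in>K. Const (Poly_Mapping.lookup (q k) n) * p k) m
      = Poly_Mapping.lookup 0 m"
    using assms by simp
qed

lemma sum_mult_eliminate:
  fixes a b c :: "'i \<Rightarrow> 'r::comm_ring_1"
  assumes "finite K" "k0 \<in> K" "c k0 = 1"
  shows "(\<Sum>k\<in>K. a k * b k) = (\<Sum>k\<in>K. c k * a k) * b k0 + (\<Sum>k\<in>K - {k0}. a k * (b k - c k * b k0))"
  using assms
  by (simp add: sum.remove[OF assms(1,2)] sum_distrib_left sum_distrib_right sum_subtractf algebra_simps)

lemma sum_tensor_eliminate: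
  fixes \<Psi> :: "'a \<Rightarrow> ('c, 'k::field) mpoly" and p :: "'i \<Rightarrow> ('a, 'k) mpoly" and q :: "'i \<Rightarrow> ('b, 'k) mpoly"
  assumes K: "finite K" "k0 \<in> K" and ck0: "c k0 \<noteq> 0"
    and dep: "(\<Sum>k\<in>K. Const (c k) * mp_subst \<Psi> (p k)) = 0" and vars_p: "\<forall>k\<in>K. vars (p k) \<subseteq> X"
  obtains p' where "p' \<in> subst_kernel \<Psi> X"
    and "(\<Sum>k\<in>K. mp_rename Inl (p k) * mp_rename Inr (q k) :: ('a + 'b, 'k) mpoly)
      = mp_rename Inl p' * mp_rename Inr (q k0)
        + (\<Sum>k\<in>K - {k0}. mp_rename Inl (p k) * mp_rename Inr (q k - Const (c k / c k0) * q k0))"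
proof
  define p' where "p' = (\<Sum>k\<in>K. Const (c k / c k0) * p k)"
  have "Const (c k / c k0) = Const (1 / c k0) * (Const (c k) :: ('c, 'k) mpoly)" for k
    by (simp flip: Const_mult)
  then have "mp_subst \<Psi> p' = Const (1 / c k0) * (\<Sum>k\<in>K. Const (c k) * mp_subst \<Psi> (p k))"
    by (simp add: p'_def mp_subst_sum mp_subst_mult sum_distrib_left mult.assoc)
  moreover have "vars p' \<subseteq> X"
    unfolding p'_def
  proof (rule order_trans[OF vars_sum UN_least])
    fix k assume "k \<in> K"
    then show "vars (Const (c k / c k0) * p k) \<subseteq> X"
      using vars_p vars_Const_mult[of "c k / c k0" "p k"] by blast
  qed
  ultimately show "p' \<in> subst_kernel \<Psi> X"
    using dep by (simp add: subst_kernel_def)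
  have p'_renamed: "mp_rename Inl p' = (\<Sum>k\<in>K. Const (c k / c k0) * mp_rename Inl (p k) :: ('a + 'b, 'k) mpoly)"
    by (simp add: p'_def mp_rename_sum mp_rename_mult)
  show "(\<Sum>k\<in>K. mp_rename Inl (p k) * mp_rename Inr (q k) :: ('a + 'b, 'k) mpoly)
      = mp_rename Inl p' * mp_rename Inr (q k0)
        + (\<Sum>k\<in>K - {k0}. mp_rename Inl (p k) * mp_rename Inr (q k - Const (c k / c k0) * q k0))"
    unfolding p'_renamed mp_rename_diff mp_rename_mult mp_rename_Const
    by (rule sum_mult_eliminate) (use K ck0 in simp_all)
qed

text \<open>Induction on the number of summands: if the images of the left factors are linearly
  dependent, one summand can be eliminated modulo the ideal; otherwise all images of the right
  factors vanish.\<close>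

lemma sum_tensor_in_sum_ideal:
  fixes \<Psi>1 :: "'a \<Rightarrow> ('c, 'k::field) mpoly" and \<Psi>2 :: "'b \<Rightarrow> ('d, 'k) mpoly"
    and p :: "'i \<Rightarrow> ('a, 'k) mpoly" and q :: "'i \<Rightarrow> ('b, 'k) mpoly"
  assumes "finite K" and "\<forall>k\<in>K. vars (p k) \<subseteq> X \<and> vars (q k) \<subseteq> Y"
    and "mp_subst (tensor_subst \<Psi>1 \<Psi>2) (\<Sum>k\<in>K. mp_rename Inl (p k) * mp_rename Inr (q k)) = 0"
  shows "(\<Sum>k\<in>K. mp_rename Inl (p k) * mp_rename Inr (q k))
    \<in> sum_ideal (subst_kernel \<Psi>1 X) (subst_kernel \<Psi>2 Y)"
  using assms
proof (induction K arbitrary: q rule: finite_psubset_induct)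
  case (psubset K)
  let ?I = "sum_ideal (subst_kernel \<Psi>1 X) (subst_kernel \<Psi>2 Y)"
  show ?case
  proof (cases "\<exists>c. (\<Sum>k\<in>K. Const (c k) * mp_subst \<Psi>1 (p k)) = 0 \<and> (\<exists>k0\<in>K. c k0 \<noteq> 0)")
    case True
    then obtain c k0 where k0: "k0 \<in> K" "c k0 \<noteq> 0"
      and dep: "(\<Sum>k\<in>K. Const (c k) * mp_subst \<Psi>1 (p k)) = 0"
      by blast
    define q' where "q' k = q k - Const (c k / c k0) * q k0" for k
    obtain p' where p': "p' \<in> subst_kernel \<Psi>1 X"
      and split: "(\<Sum>k\<in>K. mp_rename Inl (p k) * mp_rename Inr (q k))
        = mp_rename Inl p' * mp_rename Inr (q k0) + (\<Sum>k\<in>K - {k0}. mp_rename Inl (p k) * mp_rename Inr (q' k))"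
      unfolding q'_def using sum_tensor_eliminate[OF psubset.hyps(1) k0 dep] psubset.prems(1) by blast
    have "mp_rename Inr (q k0) * mp_rename Inl p' \<in> ?I"
      using p' unfolding sum_ideal_def by (intro ideal_gen_mult_generator) blast
    then have first: "mp_rename Inl p' * mp_rename Inr (q k0) \<in> ?I"
      by (simp only: mult.commute)
    have first0: "mp_subst (tensor_subst \<Psi>1 \<Psi>2) (mp_rename Inl p' * mp_rename Inr (q k0)) = 0"
      using p' by (simp add: subst_kernel_def mp_subst_mult mp_subst_tensor_subst_Inl)
    have "(\<Sum>k\<in>K - {k0}. mp_rename Inl (p k) * mp_rename Inr (q' k)) \<in> ?I"
    proof (rule psubset.IH)
      show "K - {k0} \<subset> K" using k0 by blast
      show "\<forall>k\<in>K - {k0}. vars (p k) \<subseteq> X \<and> vars (q' k) \<subseteq> Y"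
      proof
        fix k assume "k \<in> K - {k0}"
        then show "vars (p k) \<subseteq> X \<and> vars (q' k) \<subseteq> Y"
          using psubset.prems(1) k0(1) vars_diff[of "q k"] vars_Const_mult[of "c k / c k0" "q k0"]
          unfolding q'_def by blast
      qed
      show "mp_subst (tensor_subst \<Psi>1 \<Psi>2) (\<Sum>k\<in>K - {k0}. mp_rename Inl (p k) * mp_rename Inr (q' k)) = 0"
        using psubset.prems(2) first0 by (simp add: split mp_subst_add)
    qed
    with first show ?thesis
      unfolding split sum_ideal_def by (rule ideal_gen_add)
  next
    case False
    have "(\<Sum>k\<in>K. mp_rename Inl (mp_subst \<Psi>1 (p k)) * mp_rename Inr (mp_subst \<Psi>2 (q k))) = 0"
      using psubset.prems(2)
      by (simp add: mp_subst_sum mp_subst_mult mp_subst_tensor_subst_Inl mp_subst_tensor_subst_Inr)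
    note coefficients = sum_tensor_eq_0_coefficients[OF this]
    have "mp_subst \<Psi>2 (q k) = 0" if "k \<in> K" for k
    proof (rule poly_mapping_eqI)
      fix n
      show "Poly_Mapping.lookup (mp_subst \<Psi>2 (q k)) n = Poly_Mapping.lookup 0 n"
        using False coefficients[of n] that by auto
    qed
    then show ?thesis
      using psubset.prems(1) unfolding sum_ideal_def subst_kernel_def
      by (intro ideal_gen_sum ideal_gen_mult_generator) blast
  qed
qed

lemma lookup_map_key:
  assumes "inj f"
  shows "Poly_Mapping.lookup (Poly_Mapping.map_key f p) x = Poly_Mapping.lookup p (f x)"
proof -
  note assms[transfer_rule]
  show ?thesis by transfer simp
qed

lemma monom_rename_Inl_Inr_map_key:
  "monom_rename Inl (Poly_Mapping.map_key Inl M) + monom_rename Inr (Poly_Mapping.map_key Inr M) = M"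
proof (rule poly_mapping_eqI)
  fix v
  show "Poly_Mapping.lookup (monom_rename Inl (Poly_Mapping.map_key Inl M)
      + monom_rename Inr (Poly_Mapping.map_key Inr M)) v = Poly_Mapping.lookup M v"
    by (cases v) (simp_all add: lookup_add lookup_monom_rename_inj lookup_monom_rename_notin_range image_iff
        lookup_map_key)
qed

lemma subst_kernel_tensor_subst_subset:
  fixes \<Psi>1 :: "'a \<Rightarrow> ('c, 'k::field) mpoly" and \<Psi>2 :: "'b \<Rightarrow> ('d, 'k) mpoly"
  shows "subst_kernel (tensor_subst \<Psi>1 \<Psi>2) (Inl ` X \<union> Inr ` Y)
    \<subseteq> sum_ideal (subst_kernel \<Psi>1 X) (subst_kernel \<Psi>2 Y)"
proof
  fix E assume E: "E \<in> subst_kernel (tensor_subst \<Psi>1 \<Psi>2) (Inl ` X \<union> Inr ` Y)"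
  define p where "p (M :: ('a + 'b) \<Rightarrow>\<^sub>0 nat)
    = Poly_Mapping.single (Poly_Mapping.map_key Inl M) (Poly_Mapping.lookup E M)" for M
  define q where "q (M :: ('a + 'b) \<Rightarrow>\<^sub>0 nat)
    = (Poly_Mapping.single (Poly_Mapping.map_key Inr M) 1 :: ('b, 'k) mpoly)" for M
  have "mp_rename Inl (p M) * mp_rename Inr (q M) = Poly_Mapping.single M (Poly_Mapping.lookup E M)" for M
    unfolding p_def q_def mp_rename_eq_sum_single
    by (simp add: mult_single monom_rename_Inl_Inr_map_key)
  then have E_eq: "E = (\<Sum>M\<in>Poly_Mapping.keys E. mp_rename Inl (p M) * mp_rename Inr (q M))"
    by (simp add: poly_mapping_sum_single)
  have "vars (p M) \<subseteq> X \<and> vars (q M) \<subseteq> Y" if "M \<in> Poly_Mapping.keys E" for M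
    using that E by (auto simp: p_def q_def vars_def subst_kernel_def keys_map_key)
  with E show "E \<in> sum_ideal (subst_kernel \<Psi>1 X) (subst_kernel \<Psi>2 Y)"
    by (subst E_eq, intro sum_tensor_in_sum_ideal) (auto simp: subst_kernel_def simp flip: E_eq)
qed

context
  fixes \<Psi>1 :: "'a \<Rightarrow> ('c, 'k::field) mpoly" and \<Psi>2 :: "'b \<Rightarrow> ('d, 'k) mpoly"
    and \<Phi> :: "'i \<Rightarrow> ('e, 'k) mpoly" and split :: "'i \<Rightarrow> 'a \<times> 'b"
    and deg1 :: "'a \<Rightarrow> 'g \<Rightarrow> int" and deg2 :: "'b \<Rightarrow> 'g \<Rightarrow> int"
    and Q :: "'i set" and X :: "'a set" and Y :: "'b set"
  assumes bij: "bij_betw split Q {(x, y). x \<in> X \<and> y \<in> Y \<and> deg1 x = deg2 y}"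
    and kernel: "\<And>f. mp_subst \<Phi> f = 0 \<longleftrightarrow>
      mp_subst (\<lambda>i. mp_rename Inl (\<Psi>1 (fst (split i))) * mp_rename Inr (\<Psi>2 (snd (split i)))) f = 0"
begin

lemma mp_subst_tensor_pairs_eq_0_iff:
  "mp_subst (tensor_subst \<Psi>1 \<Psi>2)
      (mp_subst (\<lambda>(x, y). Var (Inl x) * Var (Inr y)) (mp_rename split f)) = 0
    \<longleftrightarrow> mp_subst \<Phi> f = 0"
  unfolding kernel
  by (simp add: mp_subst_mp_rename mp_subst_mp_subst mp_subst_mult tensor_subst_def case_prod_beta)

lemma toric_fiber_product_subset_image:
  "toric_fiber_product deg1 X deg2 Y (subst_kernel \<Psi>1 X) (subst_kernel \<Psi>2 Y)
    \<subseteq> mp_rename split ` subst_kernel \<Phi> Q"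
proof
  fix F assume "F \<in> toric_fiber_product deg1 X deg2 Y (subst_kernel \<Psi>1 X) (subst_kernel \<Psi>2 Y)"
  then have vF: "vars F \<subseteq> {(x, y). x \<in> X \<and> y \<in> Y \<and> deg1 x = deg2 y}"
    and WF: "mp_subst (\<lambda>(x, y). Var (Inl x) * Var (Inr y)) F \<in> sum_ideal (subst_kernel \<Psi>1 X) (subst_kernel \<Psi>2 Y)"
    by (simp_all add: toric_fiber_product_def sum_ideal_def)
  define f where "f = mp_rename (inv_into Q split) F"
  have F_eq: "F = mp_rename split f"
    unfolding f_def mp_rename_mp_rename
    by (rule mp_rename_id_on[symmetric]) (use vF bij_betw_inv_into_right[OF bij] in blast)
  have "vars f \<subseteq> Q"
    using vars_mp_rename[of "inv_into Q split" F] vF bij_betw_apply[OF bij_betw_inv_into[OF bij]]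
    unfolding f_def by blast
  moreover have "mp_subst \<Phi> f = 0"
    using mp_subst_tensor_subst_sum_ideal[OF WF] mp_subst_tensor_pairs_eq_0_iff[of f]
    by (simp flip: F_eq)
  ultimately show "F \<in> mp_rename split ` subst_kernel \<Phi> Q"
    using F_eq by (auto simp: subst_kernel_def)
qed

lemma image_subset_toric_fiber_product:
  "mp_rename split ` subst_kernel \<Phi> Q
    \<subseteq> toric_fiber_product deg1 X deg2 Y (subst_kernel \<Psi>1 X) (subst_kernel \<Psi>2 Y)"
proof
  let ?C = "{(x, y). x \<in> X \<and> y \<in> Y \<and> deg1 x = deg2 y}"
  let ?W = "\<lambda>(x, y). Var (Inl x) * Var (Inr y) :: ('a + 'b, 'k) mpoly"
  fix F assume "F \<in> mp_rename split ` subst_kernel \<Phi> Q"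
  then obtain f where F_eq: "F = mp_rename split f" and vf: "vars f \<subseteq> Q" and zf: "mp_subst \<Phi> f = 0"
    by (auto simp: subst_kernel_def)
  have vF: "vars F \<subseteq> ?C"
    using vars_mp_rename[of split f] vf bij_betw_imp_surj_on[OF bij] unfolding F_eq by blast
  have "vars (?W v) \<subseteq> Inl ` X \<union> Inr ` Y" if "v \<in> ?C" for v
    using that vars_mult[of "Var (Inl (fst v))" "Var (Inr (snd v))"] vars_Var
    by (fastforce simp: case_prod_beta)
  with vF have "vars (mp_subst ?W F) \<subseteq> Inl ` X \<union> Inr ` Y"
    using vars_mp_subst[of ?W F] by blast
  then have "mp_subst ?W F \<in> subst_kernel (tensor_subst \<Psi>1 \<Psi>2) (Inl ` X \<union> Inr ` Y)"
    using mp_subst_tensor_pairs_eq_0_iff[of f] zf by (simp add: subst_kernel_def F_eq)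
  then have "mp_subst ?W F \<in> sum_ideal (subst_kernel \<Psi>1 X) (subst_kernel \<Psi>2 Y)"
    using subst_kernel_tensor_subst_subset[of \<Psi>1 \<Psi>2 X Y] by blast
  with vF show "F \<in> toric_fiber_product deg1 X deg2 Y (subst_kernel \<Psi>1 X) (subst_kernel \<Psi>2 Y)"
    by (simp add: toric_fiber_product_def sum_ideal_def)
qed

lemma toric_fiber_product_subst_kernels:
  "toric_fiber_product deg1 X deg2 Y (subst_kernel \<Psi>1 X) (subst_kernel \<Psi>2 Y)
    = mp_rename split ` subst_kernel \<Phi> Q"
  using toric_fiber_product_subset_image image_subset_toric_fiber_product by (rule equalityI)

end

section \<open>Hidden variable ideals\<close>

lemma finite_Dset: "finite F \<Longrightarrow> finite (Dset d F)"
  unfolding Dset_def by (rule finite_PiE) auto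

lemma inj_on_restrict_Dset_Un: "inj_on (\<lambda>i. (restrict i A, restrict i B)) (Dset d (A \<union> B))"
proof (rule inj_onI, rule ext)
  fix i i' k
  assume i: "i \<in> Dset d (A \<union> B)" and i': "i' \<in> Dset d (A \<union> B)"
    and eq: "(restrict i A, restrict i B) = (restrict i' A, restrict i' B)"
  show "i k = i' k"
  proof (cases "k \<in> A \<union> B")
    case True
    from eq have "restrict i A k = restrict i' A k" "restrict i B k = restrict i' B k"
      by simp_all
    with True show ?thesis
      by (auto split: if_splits)
  next
    case False
    then show ?thesis
      using PiE_arb[OF i[unfolded Dset_def] False] PiE_arb[OF i'[unfolded Dset_def] False] by simp
  qed
qed

lemma restrict_Dset_Un_glue:
  assumes x: "x \<in> Dset d A" and y: "y \<in> Dset d B"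
    and agree: "restrict x (A \<inter> B) = restrict y (A \<inter> B)"
  obtains i where "i \<in> Dset d (A \<union> B)" "restrict i A = x" "restrict i B = y"
proof
  have x_ext: "x k = undefined" if "k \<notin> A" for k
    using PiE_arb[OF x[unfolded Dset_def] that] .
  have y_ext: "y k = undefined" if "k \<notin> B" for k
    using PiE_arb[OF y[unfolded Dset_def] that] .
  define i where "i k = (if k \<in> A then x k else y k)" for k
  show "i \<in> Dset d (A \<union> B)"
    using x y y_ext by (auto simp: i_def Dset_def PiE_iff extensional_def)
  show "restrict i A = x"
    by (rule ext) (simp add: i_def x_ext)
  show "restrict i B = y"
  proof
    fix k
    show "restrict i B k = y k"
      using fun_cong[OF agree, of k] y_ext[of k] by (auto simp: i_def)
  qed
qed

lemma bij_betw_restrict_Dset_Un: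
  "bij_betw (\<lambda>i. (restrict i A, restrict i B)) (Dset d (A \<union> B))
     {(x, y). x \<in> Dset d A \<and> y \<in> Dset d B \<and> restrict x (A \<inter> B) = restrict y (A \<inter> B)}"
  unfolding bij_betw_def
proof (intro conjI inj_on_restrict_Dset_Un equalityI subsetI)
  fix xy
  assume "xy \<in> {(x, y). x \<in> Dset d A \<and> y \<in> Dset d B \<and> restrict x (A \<inter> B) = restrict y (A \<inter> B)}"
  then obtain x y where xy: "xy = (x, y)" and x: "x \<in> Dset d A" and y: "y \<in> Dset d B"
    and agree: "restrict x (A \<inter> B) = restrict y (A \<inter> B)"
    by blast
  obtain i where "i \<in> Dset d (A \<union> B)" "restrict i A = x" "restrict i B = y"
    using restrict_Dset_Un_glue[OF x y agree] .
  then show "xy \<in> (\<lambda>i. (restrict i A, restrict i B)) ` Dset d (A \<union> B)"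
    unfolding xy by force
qed (auto simp: Dset_def)

lemma sum_Dset_Un_disjoint:
  assumes "A \<inter> B = {}"
  shows "(\<Sum>i\<in>Dset d (A \<union> B). g (restrict i A) (restrict i B)) = (\<Sum>x\<in>Dset d A. \<Sum>y\<in>Dset d B. g x y)"
proof -
  have "{(x, y). x \<in> Dset d A \<and> y \<in> Dset d B \<and> restrict x (A \<inter> B) = restrict y (A \<inter> B)}
      = Dset d A \<times> Dset d B"
    using assms by auto
  then have "bij_betw (\<lambda>i. (restrict i A, restrict i B)) (Dset d (A \<union> B)) (Dset d A \<times> Dset d B)"
    using bij_betw_restrict_Dset_Un[of A B d] by simp
  then show ?thesis
    by (simp add: sum.reindex_bij_betw[symmetric, where g = "case_prod g"] sum.cartesian_product)
qed

lemma unitvec_eq_iff: "unitvec a = unitvec b \<longleftrightarrow> a = b"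
proof
  assume "unitvec a = unitvec b"
  then have "unitvec a a = unitvec b a" by simp
  then show "a = b" by (simp add: unitvec_def split: if_splits)
qed simp

lemma unitvec_linear_independent:
  assumes "finite A" "(\<lambda>\<tau>. \<Sum>\<sigma>\<in>A. c \<sigma> * unitvec \<sigma> \<tau>) = (\<lambda>\<tau>. 0)" "\<sigma> \<in> A"
  shows "c \<sigma> = 0"
proof -
  have "(\<Sum>\<sigma>'\<in>A. c \<sigma>' * unitvec \<sigma>' \<sigma>) = c \<sigma>"
    using assms(1,3) by (simp add: unitvec_def if_distrib cong: if_cong)
  then show ?thesis
    using fun_cong[OF assms(2), of \<sigma>] by simp
qed

definition merge_index :: "nat set \<Rightarrow> (nat \<Rightarrow> nat) \<Rightarrow> (nat \<Rightarrow> nat) \<Rightarrow> nat \<Rightarrow> nat" where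
  "merge_index H j i = (\<lambda>k. if k \<in> H then j k else i k)"

definition hidden_param :: "nat set set \<Rightarrow> (nat \<Rightarrow> nat) \<Rightarrow> nat set \<Rightarrow> (nat \<Rightarrow> nat)
    \<Rightarrow> (nat set \<times> (nat \<Rightarrow> nat), 'k::comm_ring_1) mpoly" where
  "hidden_param \<Delta> d H i = mp_subst (phi_map \<Delta>) (psi_map d H i)"

lemma hidden_param_eq: "hidden_param \<Delta> d H i = (\<Sum>j\<in>Dset d H. phi_map \<Delta> (merge_index H j i))"
  by (simp add: hidden_param_def psi_map_def mp_subst_sum merge_index_def)

lemma hidden_ideal_eq_subst_kernel:
  "hidden_ideal H \<Delta> d = subst_kernel (hidden_param \<Delta> d H) (Dset d (\<Union>\<Delta> - H))"
  unfolding hidden_ideal_def subst_kernel_def hidden_param_def mp_subst_mp_subst ..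

lemma phi_map_cong:
  "(\<And>F k. F \<in> facets \<Delta> \<Longrightarrow> k \<in> F \<Longrightarrow> i k = i' k) \<Longrightarrow> phi_map \<Delta> i = phi_map \<Delta> i'"
  unfolding phi_map_def by (intro prod.cong refl arg_cong[where f = Var]) (auto simp: restrict_def)

lemma exists_facet_superset:
  assumes "finite \<Delta>" "A \<in> \<Delta>"
  shows "\<exists>F\<in>facets \<Delta>. A \<subseteq> F"
proof -
  obtain F where "F \<in> {G\<in>\<Delta>. A \<subseteq> G}" "\<forall>G\<in>{G\<in>\<Delta>. A \<subseteq> G}. F \<subseteq> G \<longrightarrow> F = G"
    using finite_has_maximal[of "{G\<in>\<Delta>. A \<subseteq> G}"] assms by auto
  then show ?thesis
    unfolding facets_def by blast
qed

lemma finite_facets: "finite \<Delta> \<Longrightarrow> finite (facets \<Delta>)"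
  unfolding facets_def by simp

lemma homogeneous_hidden_param:
  assumes "finite (facets \<Delta>)" "F1 \<in> facets \<Delta>" "S \<subseteq> F1" "H \<inter> S = {}"
  shows "homogeneous (\<lambda>(F, j). if F = F1 then unitvec (restrict j S) else (\<lambda>_. 0))
    (unitvec (restrict i S)) (hidden_param \<Delta> d H i :: (_, 'k::comm_ring_1) mpoly)"
  unfolding hidden_param_eq
proof (rule homogeneous_sum)
  fix j
  let ?deg = "\<lambda>(F, j). if F = F1 then unitvec (restrict j S) else (\<lambda>_. 0 :: int)"
  have "(\<lambda>\<tau>. \<Sum>F\<in>facets \<Delta>. ?deg (F, restrict (merge_index H j i) F) \<tau>) = unitvec (restrict i S)"
  proof
    fix \<tau>
    have "restrict (restrict (merge_index H j i) F1) S = restrict i S"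
      using assms(3,4) by (auto simp: restrict_def merge_index_def fun_eq_iff)
    then show "(\<Sum>F\<in>facets \<Delta>. ?deg (F, restrict (merge_index H j i) F) \<tau>) = unitvec (restrict i S) \<tau>"
      using assms(1,2) by (simp add: if_distrib[of "\<lambda>f. f \<tau>"] cong: if_cong)
  qed
  moreover have "homogeneous ?deg (\<lambda>\<tau>. \<Sum>F\<in>facets \<Delta>. ?deg (F, restrict (merge_index H j i) F) \<tau>)
      (\<Prod>F\<in>facets \<Delta>. Var (F, restrict (merge_index H j i) F) :: (_, 'k) mpoly)"
    by (rule homogeneous_prod) (rule homogeneous_Var)
  ultimately show "homogeneous ?deg (unitvec (restrict i S)) (phi_map \<Delta> (merge_index H j i) :: (_, 'k) mpoly)"
    unfolding phi_map_def by simp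
qed

lemma homogeneous_hidden_ideal:
  assumes "finite \<Delta>" "S \<in> \<Delta>" "H \<inter> S = {}"
  shows "homogeneous_ideal (\<lambda>i. unitvec (restrict i S)) (Dset d (\<Union>\<Delta> - H))
    (hidden_ideal H \<Delta> d :: (nat \<Rightarrow> nat, 'k::comm_ring_1) mpoly set)"
proof -
  obtain F1 where "F1 \<in> facets \<Delta>" "S \<subseteq> F1"
    using exists_facet_superset[OF assms(1,2)] by blast
  then show ?thesis
    unfolding hidden_ideal_eq_subst_kernel
    by (intro homogeneous_ideal_subst_kernel
        [where deg' = "\<lambda>(F, j). if F = F1 then unitvec (restrict j S) else (\<lambda>_. 0)"]
        homogeneous_hidden_param finite_facets assms)
qed

section \<open>Reducible complexes\<close>

lemma simplicial_complex_downward_closed: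
  "simplicial_complex V \<Delta> \<Longrightarrow> F \<in> \<Delta> \<Longrightarrow> G \<subseteq> F \<Longrightarrow> G \<in> \<Delta>"
  unfolding simplicial_complex_def by blast

lemma facet_of_component_is_facet:
  assumes cx2: "simplicial_complex V2 \<Delta>2"
    and un: "\<Delta>1 \<union> \<Delta>2 = \<Delta>" and sep: "\<Delta>1 \<inter> \<Delta>2 = Pow S"
    and F: "F \<in> facets \<Delta>1" "F \<noteq> S"
  shows "F \<in> facets \<Delta>"
proof -
  have F1: "F \<in> \<Delta>1" and max: "\<And>G. G \<in> \<Delta>1 \<Longrightarrow> F \<subseteq> G \<Longrightarrow> G = F"
    using F(1) unfolding facets_def by auto
  have "G = F" if G: "G \<in> \<Delta>" "F \<subseteq> G" for G
  proof (cases "G \<in> \<Delta>1")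
    case True
    then show ?thesis using max G(2) by blast
  next
    case False
    then have "F \<in> \<Delta>2"
      using un G simplicial_complex_downward_closed[OF cx2, of G F] by blast
    then have "F \<subseteq> S" using F1 sep by blast
    moreover have "S \<in> \<Delta>1" using sep by blast
    ultimately show ?thesis using max F(2) by blast
  qed
  moreover have "F \<in> \<Delta>" using F1 un by blast
  ultimately show ?thesis unfolding facets_def by blast
qed

lemma prod_eq_prod_Int_times_remainder:
  assumes "finite A" "A - B \<subseteq> {s}"
  shows "prod g A = prod g (A \<inter> B) * (if s \<in> A \<and> s \<notin> B then g s else 1)"
proof (cases "s \<in> A \<and> s \<notin> B")
  case True
  then have "insert s (A \<inter> B) = A" using assms(2) by blast
  moreover have "prod g (insert s (A \<inter> B)) = g s * prod g (A \<inter> B)"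
    using assms(1) True by simp
  ultimately show ?thesis using True by (simp add: mult.commute)
next
  case False
  then have "A \<inter> B = A" using assms(2) by blast
  with False show ?thesis by auto
qed

lemma prod_if_mem_eq_prod_Int:
  "finite A \<Longrightarrow> (\<Prod>x\<in>A. if x \<in> B then g x else 1) = prod g (B \<inter> A)"
  by (simp add: prod.inter_filter[symmetric] Int_def conj_commute)

locale reducible_complex =
  fixes n :: nat and d :: "nat \<Rightarrow> nat" and H S :: "nat set" and \<Delta> \<Delta>1 \<Delta>2 :: "nat set set"
  assumes cx: "simplicial_complex {1..n} \<Delta>" and supp: "\<Union>\<Delta> = {1..n}"
    and hid: "H \<subseteq> {1..n}"
    and sub1: "simplicial_complex (\<Union>\<Delta>1) \<Delta>1" "\<Delta>1 \<subseteq> \<Delta>"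
    and sub2: "simplicial_complex (\<Union>\<Delta>2) \<Delta>2" "\<Delta>2 \<subseteq> \<Delta>"
    and un: "\<Delta>1 \<union> \<Delta>2 = \<Delta>" and sep: "\<Delta>1 \<inter> \<Delta>2 = Pow S"
    and HS: "H \<inter> S = {}"
begin

abbreviation "O1 \<equiv> \<Union>\<Delta>1 - H"
abbreviation "O2 \<equiv> \<Union>\<Delta>2 - H"
abbreviation "H1 \<equiv> H \<inter> \<Union>\<Delta>1"
abbreviation "H2 \<equiv> H \<inter> \<Union>\<Delta>2"

lemma finite_complexes: "finite \<Delta>" "finite \<Delta>1" "finite \<Delta>2"
proof -
  have "\<Delta> \<subseteq> Pow {1..n}" using cx by (auto simp: simplicial_complex_def)
  then show "finite \<Delta>" by (rule finite_subset) simp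
  then show "finite \<Delta>1" "finite \<Delta>2"
    using finite_subset[OF sub1(2)] finite_subset[OF sub2(2)] by blast+
qed

lemma finite_separator: "finite S"
proof -
  have "S \<in> \<Delta>" using sep un by blast
  then have "S \<subseteq> {1..n}" using cx by (auto simp: simplicial_complex_def)
  then show ?thesis by (rule finite_subset) simp
qed

lemmas downward_closed1 = simplicial_complex_downward_closed[OF sub1(1)]
  and downward_closed2 = simplicial_complex_downward_closed[OF sub2(1)]

lemma separator_in: "S \<in> \<Delta>1" "S \<in> \<Delta>2"
proof -
  have "S \<in> \<Delta>1 \<inter> \<Delta>2" unfolding sep by simp
  then show "S \<in> \<Delta>1" "S \<in> \<Delta>2" by simp_all
qed

lemma vertices_Int: "\<Union>\<Delta>1 \<inter> \<Union>\<Delta>2 \<subseteq> S"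
proof
  fix v assume "v \<in> \<Union>\<Delta>1 \<inter> \<Union>\<Delta>2"
  then obtain F G where "F \<in> \<Delta>1" "G \<in> \<Delta>2" "v \<in> F" "v \<in> G" by blast
  then have "{v} \<in> \<Delta>1 \<inter> \<Delta>2" using downward_closed1[of F "{v}"] downward_closed2[of G "{v}"] by simp
  then show "v \<in> S" unfolding sep by simp
qed

lemma observed_Un: "O1 \<union> O2 = \<Union>\<Delta> - H"
  using un by auto

lemma observed_Int: "O1 \<inter> O2 = S"
  using vertices_Int separator_in HS by auto

lemma hidden_Un: "H1 \<union> H2 = H"
proof -
  have "\<Union>\<Delta>1 \<union> \<Union>\<Delta>2 = {1..n}" using un supp by auto
  then show ?thesis using hid by auto
qed

lemma hidden_Int: "H1 \<inter> H2 = {}"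
  using vertices_Int HS by auto

lemma facets_subset_Un: "facets \<Delta> \<subseteq> facets \<Delta>1 \<union> facets \<Delta>2"
  using un sub1(2) sub2(2) unfolding facets_def by blast

lemma facets1_minus_S_subset: "facets \<Delta>1 - {S} \<subseteq> facets \<Delta>"
  using facet_of_component_is_facet[OF sub2(1) un sep] by blast

lemma facets2_minus_S_subset: "facets \<Delta>2 - {S} \<subseteq> facets \<Delta>"
proof -
  have "\<Delta>2 \<union> \<Delta>1 = \<Delta>" "\<Delta>2 \<inter> \<Delta>1 = Pow S" using un sep by auto
  from facet_of_component_is_facet[OF sub1(1) this] show ?thesis by blast
qed

lemma facets12_Int_subset: "facets \<Delta>1 \<inter> facets \<Delta>2 \<subseteq> {S}"
  using sep separator_in unfolding facets_def by blast

lemma separator_facet_of_components: "S \<in> facets \<Delta> \<Longrightarrow> S \<in> facets \<Delta>1 \<and> S \<in> facets \<Delta>2"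
  using separator_in sub1(2) sub2(2) unfolding facets_def by blast

definition merge_params ::
  "(nat set \<times> (nat \<Rightarrow> nat)) + (nat set \<times> (nat \<Rightarrow> nat)) \<Rightarrow> (nat set \<times> (nat \<Rightarrow> nat), 'k::comm_ring_1) mpoly" where
  "merge_params = case_sum (\<lambda>(F, j). if F \<in> facets \<Delta> then Var (F, j) else 1)
     (\<lambda>(F, j). if F \<in> facets \<Delta> \<and> F \<noteq> S then Var (F, j) else 1)"

text \<open>The parameter of the facet \<open>F0 \<supseteq> S\<close> also absorbs the parameters of the separator \<open>S\<close>
  when \<open>S\<close> is a facet of a component but not of \<open>\<Delta>\<close>.\<close>

definition split_params :: "nat set \<Rightarrow> nat set \<times> (nat \<Rightarrow> nat)
    \<Rightarrow> ((nat set \<times> (nat \<Rightarrow> nat)) + (nat set \<times> (nat \<Rightarrow> nat)), 'k::comm_ring_1) mpoly" where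
  "split_params F0 = (\<lambda>(F, j).
     (if F \<in> facets \<Delta>1 then Var (Inl (F, j)) else 1) * (if F \<in> facets \<Delta>2 then Var (Inr (F, j)) else 1) *
     (if F = F0 \<and> S \<notin> facets \<Delta>
      then (if S \<in> facets \<Delta>1 then Var (Inl (S, restrict j S)) else 1) *
           (if S \<in> facets \<Delta>2 then Var (Inr (S, restrict j S)) else 1)
      else 1))"

lemma merge_params_phi_map:
  "mp_subst merge_params (mp_rename Inl (phi_map \<Delta>1 k) * mp_rename Inr (phi_map \<Delta>2 k))
    = (phi_map \<Delta> k :: (_, 'k::comm_ring_1) mpoly)"
proof -
  let ?a = "\<lambda>F. Var (F, restrict k F) :: (_, 'k) mpoly"
  let ?A = "{F \<in> facets \<Delta>1. F \<in> facets \<Delta>}" and ?B = "{F \<in> facets \<Delta>2. F \<in> facets \<Delta> \<and> F \<noteq> S}"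
  have finite: "finite (facets \<Delta>1)" "finite (facets \<Delta>2)"
    using finite_complexes finite_facets by blast+
  have "?A \<union> ?B = facets \<Delta>"
    using facets_subset_Un separator_facet_of_components by blast
  moreover have "?A \<inter> ?B = {}"
    using facets12_Int_subset by blast
  ultimately have "prod ?a (facets \<Delta>) = prod ?a ?A * prod ?a ?B"
    using prod.union_disjoint[of ?A ?B ?a] finite by simp
  also have "\<dots> = mp_subst merge_params (mp_rename Inl (phi_map \<Delta>1 k) * mp_rename Inr (phi_map \<Delta>2 k))"
    using finite
    by (simp add: phi_map_def mp_rename_prod mp_subst_mult mp_subst_prod merge_params_def prod.inter_filter)
  finally show ?thesis
    by (simp add: phi_map_def)
qed

lemma split_params_phi_map:
  assumes F0: "F0 \<in> facets \<Delta>" "S \<subseteq> F0"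
  shows "mp_subst (split_params F0) (phi_map \<Delta> k)
    = (mp_rename Inl (phi_map \<Delta>1 k) * mp_rename Inr (phi_map \<Delta>2 k) :: (_, 'k::comm_ring_1) mpoly)"
proof -
  let ?L = "\<lambda>F. Var (Inl (F, restrict k F)) :: (_, 'k) mpoly"
  let ?R = "\<lambda>F. Var (Inr (F, restrict k F)) :: (_, 'k) mpoly"
  let ?e = "\<lambda>j. (if S \<in> facets \<Delta>1 then Var (Inl (S, restrict j S)) else 1)
    * (if S \<in> facets \<Delta>2 then Var (Inr (S, restrict j S)) else 1) :: (_, 'k) mpoly"
  have finite: "finite (facets \<Delta>)" "finite (facets \<Delta>1)" "finite (facets \<Delta>2)"
    using finite_complexes finite_facets by blast+
  have "mp_subst (split_params F0) (phi_map \<Delta> k)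
      = (\<Prod>F\<in>facets \<Delta>. if F \<in> facets \<Delta>1 then ?L F else 1) * (\<Prod>F\<in>facets \<Delta>. if F \<in> facets \<Delta>2 then ?R F else 1)
        * (\<Prod>F\<in>facets \<Delta>. if F = F0 \<and> S \<notin> facets \<Delta> then ?e (restrict k F) else 1)"
    by (simp add: phi_map_def mp_subst_prod split_params_def prod.distrib split del: if_split)
  also have "(\<Prod>F\<in>facets \<Delta>. if F = F0 \<and> S \<notin> facets \<Delta> then ?e (restrict k F) else 1)
      = (if S \<notin> facets \<Delta> then ?e k else 1)"
    using finite(1) F0 by (simp add: restrict_restrict Int_absorb1 cong: if_cong)
  also have "(\<Prod>F\<in>facets \<Delta>. if F \<in> facets \<Delta>1 then ?L F else 1) * (\<Prod>F\<in>facets \<Delta>. if F \<in> facets \<Delta>2 then ?R F else 1)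
      * (if S \<notin> facets \<Delta> then ?e k else 1) = prod ?L (facets \<Delta>1) * prod ?R (facets \<Delta>2)"
  proof -
    have L: "prod ?L (facets \<Delta>1)
        = prod ?L (facets \<Delta>1 \<inter> facets \<Delta>) * (if S \<in> facets \<Delta>1 \<and> S \<notin> facets \<Delta> then ?L S else 1)"
      by (rule prod_eq_prod_Int_times_remainder) (use finite facets1_minus_S_subset in auto)
    have R: "prod ?R (facets \<Delta>2)
        = prod ?R (facets \<Delta>2 \<inter> facets \<Delta>) * (if S \<in> facets \<Delta>2 \<and> S \<notin> facets \<Delta> then ?R S else 1)"
      by (rule prod_eq_prod_Int_times_remainder) (use finite facets2_minus_S_subset in auto)
    show ?thesis
      unfolding L R using finite separator_facet_of_components by (auto simp: prod_if_mem_eq_prod_Int mult_ac)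
  qed
  finally show ?thesis
    by (simp add: phi_map_def mp_rename_prod)
qed

lemma split_hidden_param:
  "mp_rename Inl (hidden_param \<Delta>1 d H1 (restrict i O1)) * mp_rename Inr (hidden_param \<Delta>2 d H2 (restrict i O2))
    = (\<Sum>j\<in>Dset d H. mp_rename Inl (phi_map \<Delta>1 (merge_index H j i))
        * mp_rename Inr (phi_map \<Delta>2 (merge_index H j i)) :: (_, 'k::comm_ring_1) mpoly)"
proof -
  have merge1: "phi_map \<Delta>1 (merge_index H1 (restrict j H1) (restrict i O1)) = phi_map \<Delta>1 (merge_index H j i)"
    and merge2: "phi_map \<Delta>2 (merge_index H2 (restrict j H2) (restrict i O2)) = phi_map \<Delta>2 (merge_index H j i)"
    for j
    by (auto intro!: phi_map_cong simp: merge_index_def facets_def)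
  show ?thesis
    unfolding hidden_param_eq mp_rename_sum sum_product
    unfolding sum_Dset_Un_disjoint[OF hidden_Int, symmetric, unfolded hidden_Un] merge1 merge2 ..
qed

lemma hidden_param_kernel:
  "mp_subst (hidden_param \<Delta> d H) f = (0 :: (_, 'k::comm_ring_1) mpoly) \<longleftrightarrow>
   mp_subst (\<lambda>i. mp_rename Inl (hidden_param \<Delta>1 d H1 (restrict i O1))
     * mp_rename Inr (hidden_param \<Delta>2 d H2 (restrict i O2))) f = (0 :: (_, 'k) mpoly)"
proof -
  obtain F0 where F0: "F0 \<in> facets \<Delta>" "S \<subseteq> F0"
    using exists_facet_superset[OF finite_complexes(1)] separator_in sub1(2) by blast
  show ?thesis
  proof (rule mp_subst_eq_0_iff_of_mutual_factorization)
    show "mp_subst merge_params (mp_rename Inl (hidden_param \<Delta>1 d H1 (restrict i O1))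
        * mp_rename Inr (hidden_param \<Delta>2 d H2 (restrict i O2))) = hidden_param \<Delta> d H i" for i
      unfolding split_hidden_param by (simp add: mp_subst_sum merge_params_phi_map hidden_param_eq)
    show "mp_subst (split_params F0) (hidden_param \<Delta> d H i) = mp_rename Inl (hidden_param \<Delta>1 d H1 (restrict i O1))
        * mp_rename Inr (hidden_param \<Delta>2 d H2 (restrict i O2))" for i
      unfolding split_hidden_param by (simp add: hidden_param_eq mp_subst_sum split_params_phi_map[OF F0])
  qed
qed

lemma bij_betw_split_index:
  "bij_betw (\<lambda>i. (restrict i O1, restrict i O2)) (Dset d (\<Union>\<Delta> - H))
     {(x, y). x \<in> Dset d (\<Union>\<Delta>1 - H \<inter> \<Union>\<Delta>1) \<and> y \<in> Dset d (\<Union>\<Delta>2 - H \<inter> \<Union>\<Delta>2)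
        \<and> unitvec (restrict x S) = unitvec (restrict y S)}"
proof -
  have "\<Union>\<Delta>1 - H \<inter> \<Union>\<Delta>1 = O1" "\<Union>\<Delta>2 - H \<inter> \<Union>\<Delta>2 = O2" by blast+
  then show ?thesis
    using bij_betw_restrict_Dset_Un[of O1 O2 d]
    unfolding observed_Un observed_Int unitvec_eq_iff by simp
qed

theorem reducible_toric_fiber_product:
  "toric_fiber_product
     (\<lambda>i. unitvec (restrict i S)) (Dset d (\<Union>\<Delta>1 - H \<inter> \<Union>\<Delta>1))
     (\<lambda>i. unitvec (restrict i S)) (Dset d (\<Union>\<Delta>2 - H \<inter> \<Union>\<Delta>2))
     (hidden_ideal (H \<inter> \<Union>\<Delta>1) \<Delta>1 d) (hidden_ideal (H \<inter> \<Union>\<Delta>2) \<Delta>2 d)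
   = mp_rename (\<lambda>i. (restrict i O1, restrict i O2)) ` (hidden_ideal H \<Delta> d :: (_, 'k::field) mpoly set)"
  unfolding hidden_ideal_eq_subst_kernel
  by (rule toric_fiber_product_subst_kernels[OF bij_betw_split_index]) (simp add: hidden_param_kernel)

end

theorem theorem3p6:
  fixes n :: nat and d :: "nat \<Rightarrow> nat" and H S :: "nat set"
    and \<Delta> \<Delta>1 \<Delta>2 :: "nat set set"
  assumes cx: "simplicial_complex {1..n} \<Delta>" and supp: "\<Union>\<Delta> = {1..n}"
    and d2: "\<forall>k\<in>{1..n}. 2 \<le> d k"
    and hid: "H \<subseteq> {1..n}"
    and sub1: "simplicial_complex (\<Union>\<Delta>1) \<Delta>1" "\<Delta>1 \<subseteq> \<Delta>"
    and sub2: "simplicial_complex (\<Union>\<Delta>2) \<Delta>2" "\<Delta>2 \<subseteq> \<Delta>"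
    and un: "\<Delta>1 \<union> \<Delta>2 = \<Delta>" and sep: "\<Delta>1 \<inter> \<Delta>2 = Pow S"
    and HS: "H \<inter> S = {}"
  shows "(\<forall>c :: (nat \<Rightarrow> nat) \<Rightarrow> int.
            (\<lambda>\<tau>. \<Sum>\<sigma>\<in>Dset d S. c \<sigma> * unitvec \<sigma> \<tau>) = (\<lambda>\<tau>. 0)
              \<longrightarrow> (\<forall>\<sigma>\<in>Dset d S. c \<sigma> = 0))
     \<and> homogeneous_ideal (\<lambda>i. unitvec (restrict i S)) (Dset d (\<Union>\<Delta>1 - H \<inter> \<Union>\<Delta>1))
          (hidden_ideal (H \<inter> \<Union>\<Delta>1) \<Delta>1 d :: (nat \<Rightarrow> nat, 'k::field) mpoly set)
     \<and> homogeneous_ideal (\<lambda>i. unitvec (restrict i S)) (Dset d (\<Union>\<Delta>2 - H \<inter> \<Union>\<Delta>2))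
          (hidden_ideal (H \<inter> \<Union>\<Delta>2) \<Delta>2 d :: (nat \<Rightarrow> nat, 'k) mpoly set)
     \<and> toric_fiber_product
          (\<lambda>i. unitvec (restrict i S)) (Dset d (\<Union>\<Delta>1 - H \<inter> \<Union>\<Delta>1))
          (\<lambda>i. unitvec (restrict i S)) (Dset d (\<Union>\<Delta>2 - H \<inter> \<Union>\<Delta>2))
          (hidden_ideal (H \<inter> \<Union>\<Delta>1) \<Delta>1 d) (hidden_ideal (H \<inter> \<Union>\<Delta>2) \<Delta>2 d)
       = mp_rename (\<lambda>i. (restrict i (\<Union>\<Delta>1 - H), restrict i (\<Union>\<Delta>2 - H)))
           ` (hidden_ideal H \<Delta> d :: (nat \<Rightarrow> nat, 'k) mpoly set)"
proof -
  interpret reducible_complex n d H S \<Delta> \<Delta>1 \<Delta>2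
    using cx supp hid sub1 sub2 un sep HS by unfold_locales
  \<comment> \<open>The lower bound \<open>d2\<close> on the index ranges is not needed.\<close>
  have "H \<inter> \<Union>\<Delta>1 \<inter> S = {}" "H \<inter> \<Union>\<Delta>2 \<inter> S = {}"
    using HS by blast+
  then show ?thesis
    by (intro conjI allI impI ballI reducible_toric_fiber_product
        unitvec_linear_independent[OF finite_Dset[OF finite_separator]]
        homogeneous_hidden_ideal[OF finite_complexes(2) separator_in(1)]
        homogeneous_hidden_ideal[OF finite_complexes(3) separator_in(2)])
qed

end
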